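(* Let $q\ge2$ be an integer, $1-\frac1{2q}<\gamma<1$, $p\in\{0,\dots,q-2\}$, and $a,b,c,d\ge0$ integers with $a+b=c+d=q-1-p$. Then there is a constant $C$ such that for all $N\ge1$, $$N^{4q-4}\sum_{i,i',k,k'=0}^{N-1}\langle\mathbf 1_{\Delta i},\mathbf 1_{\Delta i'}\rangle^{p+1}_{\mathcal H^\gamma}\langle\mathbf 1_{\Delta k},\mathbf 1_{\Delta k'}\rangle^{p+1}_{\mathcal H^\gamma}\langle\mathbf 1_{\Delta i},\mathbf 1_{\Delta k}\rangle^{a}_{\mathcal H^\gamma}\langle\mathbf 1_{\Delta i},\mathbf 1_{\Delta k'}\rangle^{b}_{\mathcal H^\gamma}\langle\mathbf 1_{\Delta i'},\mathbf 1_{\Delta k}\rangle^{c}_{\mathcal H^\gamma}\langle\mathbf 1_{\Delta i'},\mathbf 1_{\Delta k'}\rangle^{d}_{\mathcal H^\gamma}\le C.$$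
   Context: $\mathcal H^\gamma$ is the closure of step functions on $[0,1]$ under $\langle \mathbf 1_{[0,s_1]},\mathbf 1_{[0,s_2]}\rangle_{\mathcal H^\gamma}=\frac12(s_1^{2\gamma}+s_2^{2\gamma}-|s_1-s_2|^{2\gamma})$. $\Delta i=[\frac iN,\frac{i+1}N]$, so $\langle\mathbf 1_{\Delta i},\mathbf 1_{\Delta i'}\rangle_{\mathcal H^\gamma}=\frac12N^{-2\gamma}(|i-i'+1|^{2\gamma}+|i-i'-1|^{2\gamma}-2|i-i'|^{2\gamma})$. *)

theory Defs
  imports Complex_Main
begin

text \<open>Inner product in H^gamma of the indicators of Delta i = [i/N,(i+1)/N] and Delta i'.\<close>
definition fbm_ip :: "real \<Rightarrow> nat \<Rightarrow> int \<Rightarrow> int \<Rightarrow> real" where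
  "fbm_ip \<gamma> N i i' = (1/2) * (real N) powr (-2*\<gamma>) *
     (\<bar>real_of_int (i - i' + 1)\<bar> powr (2*\<gamma>) + \<bar>real_of_int (i - i' - 1)\<bar> powr (2*\<gamma>)
      - 2 * \<bar>real_of_int (i - i')\<bar> powr (2*\<gamma>))"

end

theory Submission imports Defs begin

(* Write r = 2*gamma in (1,2).  The inner product fbm_ip gamma N i j equals
   N^(-r) * rho r (i - j), where rho r is half the second difference of |n|^r.  By the mean
   value theorem rho r n decays like (1 + |n|)^(-(2-r)), so every factor of the summand
   is at most 10 N^(-r) w(x,y) with the decay kernel w = decay (2-r).  The summand has
   total degree 2q; an elementary AM-GM type estimate bounds the resulting monomial in w
   by a "pattern" of q-th powers of w, i.e. of the kernel g = decay s with s = q(2-r).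
   The hypothesis gamma > 1 - 1/(2q) means exactly s < 1, so row sums of g are
   O(N^(1-s)), and the quadruple sum of the pattern is O(N^2 * N^(2-2s)).  Collecting
   the powers of N, the exponents cancel: (4q-4) - 2qr + 2 + 2(1-s) = 0.
   The file proves the decay of rho, the row-sum estimate, the monomial estimate and the
   quadruple-sum estimate in turn, and derives the theorem from them at the end. *)

section \<open>Decay of the second difference of |n|^r\<close>

lemma mvt_powr:
  fixes x y e :: real assumes "0 < x" "x < y"
  shows "\<exists>z. x < z \<and> z < y \<and> y powr e - x powr e = (y - x) * (e * z powr (e-1))"
proof -
  have "\<And>t. x \<le> t \<Longrightarrow> t \<le> y \<Longrightarrow> DERIV (\<lambda>t. t powr e) t :> e * t powr (e-1)"
    using assms by (intro has_real_derivative_powr) auto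
  from MVT2[OF assms(2) this] show ?thesis by blast
qed

text \<open>The covariance of increments of fractional Brownian motion at integer lag n,
  with r = 2*gamma.\<close>
definition rho :: "real \<Rightarrow> int \<Rightarrow> real" where
  "rho r n = (1/2) * (\<bar>real_of_int (n+1)\<bar> powr r + \<bar>real_of_int (n-1)\<bar> powr r
                      - 2 * \<bar>real_of_int n\<bar> powr r)"

lemma fbm_ip_eq_rho: "fbm_ip g N i j = real N powr (-2*g) * rho (2*g) (i-j)"
  unfolding fbm_ip_def rho_def by (simp add: algebra_simps)

lemma rho_minus: "rho r (-n) = rho r n"
  unfolding rho_def by (simp add: abs_minus_commute add.commute)

text \<open>Away from the origin the second difference of x^r is controlled by the second
  derivative, i.e. it decays like x^(r-2); two applications of the mean value theorem.\<close>
lemma second_difference_powr_bound: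
  fixes x r :: real assumes "2 \<le> x" "1 < r" "r < 2"
  shows "\<bar>(1/2) * ((x+1) powr r + (x-1) powr r - 2 * x powr r)\<bar> \<le> 6 * (1+x) powr (-(2-r))"
proof -
  obtain z1 where z1: "x < z1" "z1 < x+1" "(x+1) powr r - x powr r = ((x+1) - x) * (r * z1 powr (r-1))"
    using mvt_powr[of x "x+1" r] assms by auto
  obtain z2 where z2: "x-1 < z2" "z2 < x" "x powr r - (x-1) powr r = (x - (x-1)) * (r * z2 powr (r-1))"
    using mvt_powr[of "x-1" x r] assms by auto
  obtain z3 where z3: "x-1 < z3" "z3 < x+1"
      "(x+1) powr (r-1) - (x-1) powr (r-1) = ((x+1) - (x-1)) * ((r-1) * z3 powr (r-1-1))"
    using mvt_powr[of "x-1" "x+1" "r-1"] assms by auto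
  have diff_eq: "(1/2) * ((x+1) powr r + (x-1) powr r - 2 * x powr r)
                 = (1/2) * r * (z1 powr (r-1) - z2 powr (r-1))"
    using z1(3) z2(3) by (simp add: algebra_simps)
  have diff_nonneg: "0 \<le> (1/2) * r * (z1 powr (r-1) - z2 powr (r-1))"
    using z1 z2 assms by (simp add: powr_mono2)
  have z3_bound: "z3 powr (r-1-1) \<le> (1+x) powr (-(2-r)) * 3"
  proof -
    have "z3 powr (r-1-1) \<le> (x-1) powr (-(2-r))"
      using z3 assms by (simp add: powr_mono2' algebra_simps)
    also have "\<dots> \<le> ((1+x)/3) powr (-(2-r))" using assms by (intro powr_mono2') auto
    also have "\<dots> = (1+x) powr (-(2-r)) * 3 powr (2-r)"
      by (simp add: powr_divide powr_minus divide_simps flip: powr_add)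
    also have "\<dots> \<le> (1+x) powr (-(2-r)) * 3"
      using powr_mono[of "2-r" 1 3] assms by (intro mult_left_mono) auto
    finally show ?thesis .
  qed
  have "(1/2) * r * (z1 powr (r-1) - z2 powr (r-1)) \<le> (1/2) * r * ((x+1) powr (r-1) - (x-1) powr (r-1))"
    using z1 z2 assms by (intro mult_left_mono diff_mono powr_mono2) auto
  also have "\<dots> = r * ((r-1) * z3 powr (r-1-1))" using z3(3) by simp
  also have "\<dots> \<le> 2 * (1 * ((1+x) powr (-(2-r)) * 3))"
    using assms z3_bound by (intro mult_mono) auto
  finally show ?thesis using diff_eq diff_nonneg by simp
qed

lemma rho_decay:
  assumes "1 < r" "r < 2"
  shows "\<bar>rho r n\<bar> \<le> 10 * (1 + \<bar>real_of_int n\<bar>) powr (-(2-r))"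
proof -
  have nonneg_case: "\<bar>rho r m\<bar> \<le> 10 * (1 + \<bar>real_of_int m\<bar>) powr (-(2-r))" if "0 \<le> m" for m
  proof -
    have small_lag: "1/2 \<le> (1 + \<bar>real_of_int m\<bar>) powr (-(2-r))" if "m \<le> 1"
    proof -
      have "(2::real) powr (-1) \<le> 2 powr (-(2-r))" using assms by (intro powr_mono) auto
      also have "\<dots> \<le> (1 + \<bar>real_of_int m\<bar>) powr (-(2-r))"
        using assms that \<open>0 \<le> m\<close> by (intro powr_mono2') auto
      finally show ?thesis by (simp add: powr_minus)
    qed
    consider "m = 0" | "m = 1" | "2 \<le> m" using \<open>0 \<le> m\<close> by linarith
    then show ?thesis
    proof cases
      case 1
      then show ?thesis using small_lag by (simp add: rho_def)
    next
      case 2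
      have "\<bar>rho r m\<bar> \<le> 2"
        using 2 powr_mono[of r 2 2] powr_mono[of 1 r 2] assms by (simp add: rho_def)
      then show ?thesis using small_lag 2 by linarith
    next
      case 3
      have "rho r m = (1/2) * ((of_int m + 1) powr r + (of_int m - 1) powr r - 2 * of_int m powr r)"
        unfolding rho_def using 3 by simp
      then show ?thesis
        using second_difference_powr_bound[of "of_int m" r] 3 assms by simp
    qed
  qed
  show ?thesis
  proof (cases "0 \<le> n")
    case False
    then show ?thesis using nonneg_case[of "-n"] by (simp add: rho_minus)
  qed (rule nonneg_case)
qed

section \<open>The decay kernel and its row sums\<close>

definition decay :: "real \<Rightarrow> nat \<Rightarrow> nat \<Rightarrow> real" where
  "decay s x y = (1 + \<bar>real x - real y\<bar>) powr (-s)"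

lemma decay_nonneg: "0 \<le> decay s x y"
  unfolding decay_def by simp

lemma decay_sym: "decay s x y = decay s y x"
  unfolding decay_def by (simp add: abs_minus_commute)

lemma decay_power: "decay s x y ^ n = decay (real n * s) x y"
  unfolding decay_def by (subst powr_power) (auto simp: algebra_simps)

lemma fbm_ip_decay:
  assumes "1/2 < \<gamma>" "\<gamma> < 1"
  shows "\<bar>fbm_ip \<gamma> N (int x) (int y)\<bar> \<le> 10 * real N powr (-2*\<gamma>) * decay (2-2*\<gamma>) x y"
proof -
  have "\<bar>rho (2*\<gamma>) (int x - int y)\<bar> \<le> 10 * decay (2-2*\<gamma>) x y"
    using rho_decay[of "2*\<gamma>" "int x - int y"] assms by (simp add: decay_def)
  then have "real N powr (-2*\<gamma>) * \<bar>rho (2*\<gamma>) (int x - int y)\<bar>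
             \<le> real N powr (-2*\<gamma>) * (10 * decay (2-2*\<gamma>) x y)"
    by (rule mult_left_mono) simp
  then show ?thesis unfolding fbm_ip_eq_rho abs_mult by (simp add: mult_ac)
qed

text \<open>Comparison of the sum with an integral: for 0 < s < 1 the partial sums of
  (1+j)^(-s) grow like n^(1-s).\<close>
lemma sum_powr_bound:
  fixes s :: real assumes "0 < s" "s < 1"
  shows "(\<Sum>j<n. (1+real j) powr (-s)) \<le> real n powr (1-s) / (1-s)"
proof (induction n)
  case (Suc n)
  have "(1 + real n) powr (-s) \<le> (real (Suc n) powr (1-s) - real n powr (1-s)) / (1-s)"
  proof (cases "n = 0")
    case False
    obtain z where z: "real n < z" "z < real n + 1"
      "(real n + 1) powr (1-s) - real n powr (1-s) = ((real n + 1) - real n) * ((1-s) * z powr (1-s-1))"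
      using mvt_powr[of "real n" "real n + 1" "1-s"] False by auto
    have "(1-s) * (1 + real n) powr (-s) \<le> (1-s) * z powr (-s)"
      using z False assms by (intro mult_left_mono powr_mono2') auto
    then show ?thesis using z assms by (simp add: divide_simps algebra_simps)
  qed (use assms in \<open>simp add: divide_simps\<close>)
  then show ?case using Suc by (simp add: diff_divide_distrib)
qed simp

text \<open>Row sums of the kernel: splitting at the diagonal gives two partial sums as above.\<close>
lemma decay_row_sum:
  fixes s :: real assumes "0 < s" "s < 1" "x < N"
  shows "(\<Sum>y<N. decay s x y) \<le> 2 * (real N powr (1-s) / (1-s))"
proof -
  define G where "G = (\<lambda>j::nat. (1 + real j) powr (-s))"
  have G_nonneg: "0 \<le> G j" for j unfolding G_def by simp
  have split_diag: "decay s x y \<le> (if x \<le> y then G (y-x) else 0) + (if y \<le> x then G (x-y) else 0)" for y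
    using G_nonneg by (cases "x \<le> y") (auto simp: G_def decay_def of_nat_diff)
  have right: "(\<Sum>y<N. if x \<le> y then G (y-x) else 0) \<le> sum G {..<N}"
  proof -
    have "(\<Sum>y<N. if x \<le> y then G (y-x) else 0) = sum G ((\<lambda>y. y - x) ` {x..<N})"
      by (subst sum.reindex) (auto simp: inj_on_def intro: sum.mono_neutral_cong_right)
    also have "\<dots> \<le> sum G {..<N}" using G_nonneg by (intro sum_mono2) auto
    finally show ?thesis .
  qed
  have left: "(\<Sum>y<N. if y \<le> x then G (x-y) else 0) \<le> sum G {..<N}"
  proof -
    have "(\<Sum>y<N. if y \<le> x then G (x-y) else 0) = (\<Sum>y\<le>x. G (x-y))"
      using assms by (intro sum.mono_neutral_cong_right) auto
    also have "\<dots> = sum G ((\<lambda>y. x - y) ` {..x})"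
      by (subst sum.reindex) (auto simp: inj_on_def)
    also have "\<dots> \<le> sum G {..<N}" using G_nonneg assms by (intro sum_mono2) auto
    finally show ?thesis .
  qed
  have "(\<Sum>y<N. decay s x y) \<le> 2 * sum G {..<N}"
  proof -
    have "(\<Sum>y<N. decay s x y) \<le> (\<Sum>y<N. (if x \<le> y then G (y-x) else 0) + (if y \<le> x then G (x-y) else 0))"
      by (intro sum_mono split_diag)
    then show ?thesis using right left by (simp add: sum.distrib)
  qed
  also have "\<dots> \<le> 2 * (real N powr (1-s) / (1-s))"
    using sum_powr_bound[OF assms(1,2), of N] unfolding G_def by simp
  finally show ?thesis .
qed

section \<open>Bounding the summand\<close>

text \<open>An AM-GM type estimate: a monomial of total degree 2q in the six pair weights
  is dominated by q-th powers: compare A1*A2 with the product of the largest B- and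
  C-weights and bound the monomial by the q-th power of the larger one.\<close>
lemma monomial_le_pattern:
  fixes A1 A2 B1 B2 C1 C2 :: real
  assumes "0 \<le> A1" "0 \<le> A2" "0 \<le> B1" "0 \<le> B2" "0 \<le> C1" "0 \<le> C2"
    and "a + b = m" "c + d = m" "P + m = q"
  shows "A1^P * A2^P * B1^a * B2^b * C1^c * C2^d \<le> (A1*A2)^q + (B1^q + B2^q) * (C1^q + C2^q)"
proof -
  define X where "X = max B1 B2"
  define Y where "Y = max C1 C2"
  define M where "M = max (A1*A2) (X*Y)"
  have XY_nonneg: "0 \<le> X" "0 \<le> Y" using assms X_def Y_def by auto
  have "B1^a * B2^b \<le> X^a * X^b" using assms unfolding X_def
    by (intro mult_mono power_mono) auto
  then have hB: "B1^a * B2^b \<le> X^m" using assms by (simp add: power_add[symmetric])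
  have "C1^c * C2^d \<le> Y^c * Y^d" using assms unfolding Y_def
    by (intro mult_mono power_mono) auto
  then have hC: "C1^c * C2^d \<le> Y^m" using assms by (simp add: power_add[symmetric])
  have "A1^P * A2^P * B1^a * B2^b * C1^c * C2^d = (A1*A2)^P * ((B1^a * B2^b) * (C1^c * C2^d))"
    by (simp add: power_mult_distrib mult_ac)
  also have "\<dots> \<le> (A1*A2)^P * (X*Y)^m"
    using hB hC assms XY_nonneg by (simp add: power_mult_distrib mult_left_mono mult_mono)
  also have "\<dots> \<le> M^P * M^m" unfolding M_def using assms XY_nonneg
    by (intro mult_mono power_mono) (auto simp: le_max_iff_disj)
  also have "\<dots> = M^q" using assms by (simp add: power_add[symmetric])
  also have "\<dots> \<le> (A1*A2)^q + X^q * Y^q" unfolding M_def using assms XY_nonneg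
    by (auto simp: max_def power_mult_distrib)
  also have "\<dots> \<le> (A1*A2)^q + (B1^q + B2^q) * (C1^q + C2^q)" using assms unfolding X_def Y_def
    by (intro add_left_mono mult_mono) (auto simp: max_def)
  finally show ?thesis .
qed

lemma monomial_abs_bound:
  fixes K x1 x2 x3 x4 x5 x6 w1 w2 w3 w4 w5 w6 :: real
  assumes "\<bar>x1\<bar> \<le> K*w1" "\<bar>x2\<bar> \<le> K*w2" "\<bar>x3\<bar> \<le> K*w3" "\<bar>x4\<bar> \<le> K*w4" "\<bar>x5\<bar> \<le> K*w5" "\<bar>x6\<bar> \<le> K*w6"
  shows "\<bar>x1^P * x2^P * x3^a * x4^b * x5^c * x6^d\<bar> \<le>
         K^(P+P+a+b+c+d) * (w1^P * w2^P * w3^a * w4^b * w5^c * w6^d)"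
proof -
  have factor: "\<bar>x\<bar>^n \<le> (K*w)^n" if "\<bar>x\<bar> \<le> K*w" for x w :: real and n
    using that by (intro power_mono) auto
  have nonneg: "0 \<le> K*w1" "0 \<le> K*w2" "0 \<le> K*w3" "0 \<le> K*w4" "0 \<le> K*w5" "0 \<le> K*w6"
    using assms by (meson abs_ge_zero order_trans)+
  have "\<bar>x1^P * x2^P * x3^a * x4^b * x5^c * x6^d\<bar> =
        \<bar>x1\<bar>^P * \<bar>x2\<bar>^P * \<bar>x3\<bar>^a * \<bar>x4\<bar>^b * \<bar>x5\<bar>^c * \<bar>x6\<bar>^d"
    by (simp add: abs_mult power_abs)
  also have "\<dots> \<le> (K*w1)^P * (K*w2)^P * (K*w3)^a * (K*w4)^b * (K*w5)^c * (K*w6)^d"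
    by (intro mult_mono factor assms) (auto intro!: mult_nonneg_nonneg zero_le_power nonneg)
  also have "\<dots> = K^(P+P+a+b+c+d) * (w1^P * w2^P * w3^a * w4^b * w5^c * w6^d)"
    by (simp add: power_mult_distrib power_add mult_ac)
  finally show ?thesis .
qed

definition pattern :: "(nat \<Rightarrow> nat \<Rightarrow> real) \<Rightarrow> nat \<Rightarrow> nat \<Rightarrow> nat \<Rightarrow> nat \<Rightarrow> real" where
  "pattern g i i' k k' = g i i' * g k k' + (g i k + g i k') * (g i' k + g i' k')"

lemma summand_le_pattern:
  assumes "1/2 < \<gamma>" "\<gamma> < 1" "a + b = m" "c + d = m" "(p+1) + m = q"
  shows "fbm_ip \<gamma> N (int i) (int i') ^ (p+1) * fbm_ip \<gamma> N (int k) (int k') ^ (p+1) *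
         fbm_ip \<gamma> N (int i) (int k) ^ a * fbm_ip \<gamma> N (int i) (int k') ^ b *
         fbm_ip \<gamma> N (int i') (int k) ^ c * fbm_ip \<gamma> N (int i') (int k') ^ d
       \<le> (10 * real N powr (-2*\<gamma>)) ^ (2*q) * pattern (decay (real q * (2-2*\<gamma>))) i i' k k'"
    (is "?T \<le> ?K ^ _ * _")
proof -
  let ?w = "decay (2-2*\<gamma>)"
  let ?W = "?w i i'^(p+1) * ?w k k'^(p+1) * ?w i k^a * ?w i k'^b * ?w i' k^c * ?w i' k'^d"
  have degree: "(p+1)+(p+1)+a+b+c+d = 2*q" using assms by simp
  have factor: "\<bar>fbm_ip \<gamma> N (int x) (int y)\<bar> \<le> ?K * ?w x y" for x y
    using fbm_ip_decay[OF assms(1,2)] .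
  have "?W \<le> (?w i i' * ?w k k')^q + (?w i k^q + ?w i k'^q) * (?w i' k^q + ?w i' k'^q)"
    by (rule monomial_le_pattern[where m=m]) (use assms decay_nonneg in auto)
  also have "\<dots> = pattern (\<lambda>x y. ?w x y ^ q) i i' k k'"
    by (simp add: pattern_def power_mult_distrib)
  finally have pattern_bound: "?W \<le> pattern (decay (real q * (2-2*\<gamma>))) i i' k k'"
    unfolding decay_power .
  have "?T \<le> \<bar>?T\<bar>" by (rule abs_ge_self)
  also have "\<bar>?T\<bar> \<le> ?K ^ (2*q) * ?W"
    using monomial_abs_bound[OF factor factor factor factor factor factor,
        where P="p+1" and a=a and b=b and c=c and d=d]
    unfolding degree .
  also have "\<dots> \<le> ?K ^ (2*q) * pattern (decay (real q * (2-2*\<gamma>))) i i' k k'"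
    using pattern_bound by (rule mult_left_mono) simp
  finally show ?thesis .
qed

section \<open>Summing the pattern\<close>

lemma row_bound_nonneg:
  fixes g :: "nat \<Rightarrow> nat \<Rightarrow> real"
  assumes "\<And>x y. 0 \<le> g x y" "\<And>x. x < N \<Longrightarrow> (\<Sum>y<N. g x y) \<le> R" "0 < N"
  shows "0 \<le> R"
  using order_trans[OF sum_nonneg assms(2)[OF assms(3)]] assms(1) by blast

text \<open>Sums over a shared index: for each (i,k), the remaining sum over i' is a column
  sum, which by symmetry is a row sum.\<close>
lemma shared_index_sum_bound:
  fixes g :: "nat \<Rightarrow> nat \<Rightarrow> real"
  assumes nonneg: "\<And>x y. 0 \<le> g x y" and sym: "\<And>x y. g x y = g y x"
    and row: "\<And>x. x < N \<Longrightarrow> (\<Sum>y<N. g x y) \<le> R"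
  shows "(\<Sum>i<N. \<Sum>i'<N. \<Sum>k<N. g i k * g i' k) \<le> real N * R^2"
proof -
  have "(\<Sum>i<N. \<Sum>i'<N. \<Sum>k<N. g i k * g i' k) = (\<Sum>i<N. \<Sum>k<N. g i k * (\<Sum>i'<N. g k i'))"
    by (subst sum.swap) (simp add: sum_distrib_left sym)
  also have "\<dots> \<le> (\<Sum>i<N. \<Sum>k<N. g i k * R)"
    using row nonneg by (intro sum_mono mult_left_mono) auto
  also have "\<dots> = (\<Sum>i<N. (\<Sum>k<N. g i k) * R)" by (simp add: sum_distrib_right)
  also have "\<dots> \<le> (\<Sum>i<N. R * R)"
    using row row_bound_nonneg[OF nonneg row] by (intro sum_mono mult_right_mono) auto
  finally show ?thesis by (simp add: power2_eq_square)
qed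

text \<open>The terms of the pattern in which the two kernel factors share no summation
  index factor into products of row sums.\<close>
lemma separated_sums_bound:
  fixes g :: "nat \<Rightarrow> nat \<Rightarrow> real"
  assumes nonneg: "\<And>x y. 0 \<le> g x y" and row: "\<And>x. x < N \<Longrightarrow> (\<Sum>y<N. g x y) \<le> R"
  shows "(\<Sum>i<N. \<Sum>i'<N. \<Sum>k<N. \<Sum>k'<N. g i i' * g k k') \<le> real N^2 * R^2"
    and "(\<Sum>i<N. \<Sum>i'<N. \<Sum>k<N. \<Sum>k'<N. g i k * g i' k') \<le> real N^2 * R^2"
    and "(\<Sum>i<N. \<Sum>i'<N. \<Sum>k<N. \<Sum>k'<N. g i k' * g i' k) \<le> real N^2 * R^2"
proof -
  have row_product: "(\<Sum>k<N. g x k) * (\<Sum>k'<N. g y k') \<le> R * R" if "x < N" "y < N" for x y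
    using row that row_bound_nonneg[OF nonneg row] by (intro mult_mono) (auto intro: sum_nonneg nonneg)
  have "(\<Sum>i<N. \<Sum>i'<N. \<Sum>k<N. \<Sum>k'<N. g i i' * g k k')
        = (\<Sum>i<N. \<Sum>i'<N. g i i' * (\<Sum>k<N. \<Sum>k'<N. g k k'))"
    by (simp add: sum_distrib_left)
  also have "\<dots> = (\<Sum>i<N. \<Sum>j<N. g i j)^2"
    by (simp add: power2_eq_square sum_distrib_right)
  also have "\<dots> \<le> (real N * R)^2"
    using sum_mono[of "{..<N}" "\<lambda>i. \<Sum>j<N. g i j" "\<lambda>_. R"] row
    by (intro power_mono) (auto intro: sum_nonneg nonneg)
  finally show "(\<Sum>i<N. \<Sum>i'<N. \<Sum>k<N. \<Sum>k'<N. g i i' * g k k') \<le> real N^2 * R^2"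
    by (simp add: power_mult_distrib)
  have "(\<Sum>i<N. \<Sum>i'<N. \<Sum>k<N. \<Sum>k'<N. g i k * g i' k') =
        (\<Sum>i<N. \<Sum>i'<N. (\<Sum>k<N. g i k) * (\<Sum>k'<N. g i' k'))"
    by (simp add: sum_product)
  also have "\<dots> \<le> (\<Sum>i<N. \<Sum>i'<N. R * R)"
    by (intro sum_mono row_product) auto
  finally show "(\<Sum>i<N. \<Sum>i'<N. \<Sum>k<N. \<Sum>k'<N. g i k * g i' k') \<le> real N^2 * R^2"
    by (simp add: power2_eq_square)
  have "(\<Sum>i<N. \<Sum>i'<N. \<Sum>k<N. \<Sum>k'<N. g i k' * g i' k) =
        (\<Sum>i<N. \<Sum>i'<N. \<Sum>k'<N. \<Sum>k<N. g i k' * g i' k)"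
    by (intro sum.cong refl sum.swap)
  also have "\<dots> = (\<Sum>i<N. \<Sum>i'<N. (\<Sum>k'<N. g i k') * (\<Sum>k<N. g i' k))"
    by (simp add: sum_product)
  also have "\<dots> \<le> (\<Sum>i<N. \<Sum>i'<N. R * R)"
    by (intro sum_mono row_product) auto
  finally show "(\<Sum>i<N. \<Sum>i'<N. \<Sum>k<N. \<Sum>k'<N. g i k' * g i' k) \<le> real N^2 * R^2"
    by (simp add: power2_eq_square)
qed

lemma pattern_sum_bound:
  fixes g :: "nat \<Rightarrow> nat \<Rightarrow> real"
  assumes nonneg: "\<And>x y. 0 \<le> g x y" and sym: "\<And>x y. g x y = g y x"
    and row: "\<And>x. x < N \<Longrightarrow> (\<Sum>y<N. g x y) \<le> R"
  shows "(\<Sum>i<N. \<Sum>i'<N. \<Sum>k<N. \<Sum>k'<N. pattern g i i' k k') \<le> 5 * (real N^2 * R^2)"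
proof -
  have "real N * (\<Sum>i<N. \<Sum>i'<N. \<Sum>k<N. g i k * g i' k) \<le> real N * (real N * R^2)"
    by (intro mult_left_mono shared_index_sum_bound[OF nonneg sym row]) auto
  then have shared: "(\<Sum>i<N. \<Sum>i'<N. \<Sum>k<N. \<Sum>k'<N. g i k * g i' k) \<le> real N^2 * R^2"
                    "(\<Sum>i<N. \<Sum>i'<N. \<Sum>k<N. \<Sum>k'<N. g i k' * g i' k') \<le> real N^2 * R^2"
    by (simp_all add: sum_distrib_left power2_eq_square)
  have "(\<Sum>i<N. \<Sum>i'<N. \<Sum>k<N. \<Sum>k'<N. pattern g i i' k k') =
        (\<Sum>i<N. \<Sum>i'<N. \<Sum>k<N. \<Sum>k'<N. g i i' * g k k') + (\<Sum>i<N. \<Sum>i'<N. \<Sum>k<N. \<Sum>k'<N. g i k * g i' k)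
        + (\<Sum>i<N. \<Sum>i'<N. \<Sum>k<N. \<Sum>k'<N. g i k * g i' k') + (\<Sum>i<N. \<Sum>i'<N. \<Sum>k<N. \<Sum>k'<N. g i k' * g i' k)
        + (\<Sum>i<N. \<Sum>i'<N. \<Sum>k<N. \<Sum>k'<N. g i k' * g i' k')"
    by (simp add: pattern_def sum.distrib algebra_simps)
  then show ?thesis using separated_sums_bound[where g=g and N=N and R=R, OF nonneg row] shared by linarith
qed

text \<open>The hypothesis gamma > 1 - 1/(2q) says that the kernel exponent q(2-2*gamma) is
  below 1, which makes its row sums sublinear.\<close>
lemma exponent_range:
  assumes "q \<ge> 2" "1 - 1 / (2 * real q) < \<gamma>" "\<gamma> < 1"
  shows "1/2 < \<gamma>" "0 < real q * (2-2*\<gamma>)" "real q * (2-2*\<gamma>) < 1"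
proof -
  have "1 / (2 * real q) \<le> 1/4" using assms by (simp add: divide_simps)
  then show "1/2 < \<gamma>" using assms by linarith
  show "0 < real q * (2-2*\<gamma>)" using assms by simp
  have "real q * (1 - 1 / (2 * real q)) < real q * \<gamma>"
    using assms by (intro mult_strict_left_mono) auto
  then show "real q * (2-2*\<gamma>) < 1" using assms by (simp add: algebra_simps)
qed

lemma scaling_cancels:
  fixes N r s :: real
  assumes "0 < N" "q \<ge> 1" "s = real q * (2-r)"
  shows "N ^ (4*q-4) * (N powr (-r)) ^ (2*q) * N^2 * (N powr (1-s))^2 = 1"
proof -
  have "N ^ (4*q-4) * (N powr (-r)) ^ (2*q) * N^2 * (N powr (1-s))^2
        = N powr real (4*q-4) * N powr (real (2*q) * (-r)) * N powr 2 * N powr (2 * (1-s))"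
    using assms(1) by (simp add: powr_realpow powr_power)
  also have "\<dots> = N powr (real (4*q-4) + real (2*q) * (-r) + 2 + 2 * (1-s))"
    by (simp only: powr_add)
  also have "real (4*q-4) + real (2*q) * (-r) + 2 + 2 * (1-s) = 0"
    using assms by (simp add: of_nat_diff algebra_simps)
  finally show ?thesis using assms(1) by simp
qed

lemma quadruple_sum_bound:
  fixes q p a b c d m N :: nat and \<gamma> :: real
  defines "s \<equiv> real q * (2-2*\<gamma>)"
  assumes "q \<ge> 2" "1 - 1 / (2 * real q) < \<gamma>" "\<gamma> < 1"
    and "a + b = m" "c + d = m" "(p+1) + m = q"
  shows "(\<Sum>i<N. \<Sum>i'<N. \<Sum>k<N. \<Sum>k'<N.
           fbm_ip \<gamma> N (int i) (int i') ^ (p+1) * fbm_ip \<gamma> N (int k) (int k') ^ (p+1) *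
           fbm_ip \<gamma> N (int i) (int k) ^ a * fbm_ip \<gamma> N (int i) (int k') ^ b *
           fbm_ip \<gamma> N (int i') (int k) ^ c * fbm_ip \<gamma> N (int i') (int k') ^ d)
         \<le> 5 * 10^(2*q) * (2/(1-s))^2 *
           ((real N powr (-2*\<gamma>)) ^ (2*q) * real N^2 * (real N powr (1-s))^2)"
proof -
  note exps = exponent_range[OF assms(2-4), folded s_def]
  let ?K = "real N powr (-2*\<gamma>)" and ?R = "2 * (real N powr (1-s) / (1-s))"
  have "(\<Sum>i<N. \<Sum>i'<N. \<Sum>k<N. \<Sum>k'<N.
           fbm_ip \<gamma> N (int i) (int i') ^ (p+1) * fbm_ip \<gamma> N (int k) (int k') ^ (p+1) *
           fbm_ip \<gamma> N (int i) (int k) ^ a * fbm_ip \<gamma> N (int i) (int k') ^ b *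
           fbm_ip \<gamma> N (int i') (int k) ^ c * fbm_ip \<gamma> N (int i') (int k') ^ d)
        \<le> (\<Sum>i<N. \<Sum>i'<N. \<Sum>k<N. \<Sum>k'<N. (10 * ?K) ^ (2*q) * pattern (decay s) i i' k k')"
    unfolding s_def by (intro sum_mono summand_le_pattern[OF exps(1) assms(4-7)])
  also have "\<dots> = (10 * ?K) ^ (2*q) * (\<Sum>i<N. \<Sum>i'<N. \<Sum>k<N. \<Sum>k'<N. pattern (decay s) i i' k k')"
    by (simp add: sum_distrib_left)
  also have "\<dots> \<le> (10 * ?K) ^ (2*q) * (5 * (real N^2 * ?R^2))"
    using exps by (intro mult_left_mono pattern_sum_bound decay_nonneg decay_sym decay_row_sum) auto
  also have "\<dots> = 5 * 10^(2*q) * (2/(1-s))^2 * (?K ^ (2*q) * real N^2 * (real N powr (1-s))^2)"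
    by (simp add: power_mult_distrib power_divide mult_ac)
  finally show ?thesis .
qed

theorem mainTheorem8:
  fixes q p a b c d :: nat and \<gamma> :: real
  assumes "q \<ge> 2"
    and "1 - 1 / (2 * real q) < \<gamma>" and "\<gamma> < 1"
    and "p \<le> q - 2"
    and "a + b = q - 1 - p" and "c + d = q - 1 - p"
  shows "\<exists>C::real. \<forall>N::nat. N \<ge> 1 \<longrightarrow>
    real N ^ (4*q - 4) *
      (\<Sum>i<N. \<Sum>i'<N. \<Sum>k<N. \<Sum>k'<N.
         fbm_ip \<gamma> N (int i) (int i') ^ (p+1) * fbm_ip \<gamma> N (int k) (int k') ^ (p+1) *
         fbm_ip \<gamma> N (int i) (int k) ^ a * fbm_ip \<gamma> N (int i) (int k') ^ b *
         fbm_ip \<gamma> N (int i') (int k) ^ c * fbm_ip \<gamma> N (int i') (int k') ^ d) \<le> C"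
proof -
  define s where "s = real q * (2-2*\<gamma>)"
  have degrees: "(p+1) + (q-1-p) = q" using assms by simp
  let ?C = "5 * 10^(2*q) * (2/(1-s))^2"
  show ?thesis
  proof (intro exI[of _ ?C] allI impI)
    fix N :: nat assume "N \<ge> 1"
    have scaled: "real N ^ (4*q-4) * (?C * ((real N powr (-2*\<gamma>)) ^ (2*q) * real N^2 * (real N powr (1-s))^2)) = ?C"
      using scaling_cancels[of "real N" q s "2*\<gamma>"] \<open>N \<ge> 1\<close> assms(1) s_def by (simp add: mult_ac)
    show "real N ^ (4*q - 4) * (\<Sum>i<N. \<Sum>i'<N. \<Sum>k<N. \<Sum>k'<N.
         fbm_ip \<gamma> N (int i) (int i') ^ (p+1) * fbm_ip \<gamma> N (int k) (int k') ^ (p+1) *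
         fbm_ip \<gamma> N (int i) (int k) ^ a * fbm_ip \<gamma> N (int i) (int k') ^ b *
         fbm_ip \<gamma> N (int i') (int k) ^ c * fbm_ip \<gamma> N (int i') (int k') ^ d) \<le> ?C"
      by (rule ord_le_eq_trans[OF mult_left_mono[OF quadruple_sum_bound[OF assms(1-3,5,6) degrees,
            folded s_def]] scaled]) simp
  qed
qed

end
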